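(* Let $\mathcal{R}=(\Sigma,V,\geq_s,\Delta)$ be the term rewriting system described in the context. For every term $\tau\in T[\Sigma,V]$ in normal form (i.e. no rule of $\Delta$ is applicable to any subterm occurrence of $\tau$), $\tau$ is a polynomial $m_1\oplus\cdots\oplus m_k$ such that (1) $m_i>_p m_{i+1}$ for all $i\in[1,k-1]$, and (2) for every monomial $m_i=\alpha_1\cdots\alpha_h$, $\alpha_j\geq_l\alpha_{j+1}$ for all $j\in[1,h-1]$.
   Context: $\mathbb{F}=\mathbb{GF}(2^n)$. Signature $\Sigma=\mathbb{F}\cup\{\oplus,\otimes,f_1,\dots,f_t\}$: elements of $\mathbb{F}$ are constants, $\oplus,\otimes$ binary (field addition and multiplication), $f_1,\dots,f_t$ unary symbols for affine transformations, each $f$ having an associated affine constant $c_f\in\mathbb{F}$ (meaning $f(x\oplus y)=f(x)\oplus f(y)\oplus c_f$ for all $x,y$). $V$ is a set of variables, $\Sigma\cap V=\emptyset$, and $\geq_s$ is a total order on $V\uplus\Sigma$. Terms $T[\Sigma,V]$: smallest set containing $\mathbb{F}\cup V$ and closed under $\oplus$, $\otimes$, $f_j$; $T_{\backslash\oplus}(\Sigma,V)$ = terms not using $\oplus$. A factor is a term in $\mathbb{F}\cup V$ or of the form $f_i(\tau')$ with $\tau'\in T_{\backslash\oplus}(\Sigma,V)$; a monomial is a product $\alpha_1\otimes\cdots\otimes\alpha_k$ ($k\ge1$) of nonzero factors; a polynomial is a sum $m_1\oplus\cdots\oplus m_k$ of monomials (sums and products are treated as flat sequences). Factor order $\geq_l$: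 $\alpha\geq_l\alpha'$ iff (i) $\alpha,\alpha'\in\mathbb{F}\cup V$ and $\alpha\geq_s\alpha'$; or (ii) $\alpha=f(\tau)$, $\alpha'=f'(\tau')$ with $f\geq_s f'$, or $f=f'$ and $\tau\geq_p\tau'$; or (iii) $\alpha=f(\tau)$ and $f\geq_s\alpha'$, or $\alpha'=f(\tau)$ and $\alpha\geq_s f$. Monomial order $\geq_p$: lexicographic comparison (w.r.t. $\geq_l$) of the factor sequences sorted in descending $\geq_l$-order; $m>_p m'$ means $m\geq_p m'$ and the sorted factor sequences differ. Rules $\Delta$ (with $\tau,\tau_1,\tau_2$ terms, $m_i$ monomials, $\alpha_i$ factors, $f$ an affine symbol with constant $c$): R1: $m_1\oplus\cdots\oplus m_k\mapsto m'_1\oplus\cdots\oplus m'_k$ where $(m'_1,\dots,m'_k)={\tt sort}_{\geq_p}(m_1,\dots,m_k)\neq(m_1,\dots,m_k)$; R2: $\alpha_1\cdots\alpha_k\mapsto\alpha'_1\cdots\alpha'_k$ where $(\alpha'_1,\dots,\alpha'_k)={\tt sort}_{\geq_l}(\alpha_1,\dots,\alpha_k)\neq(\alpha_1,\dots,\alpha_k)$; R3: $\tau\oplus\tau\mapsto0$; R4: $\tau\otimes0\mapsto0$; R5: $0\otimes\tau\mapsto0$; R6: $\tau\oplus0\mapsto\tau$; R7: $0\oplus\tau\mapsto\tau$; R8: $\tau\otimes1\mapsto\tau$; R9: $1\otimes\tau\mapsto\tau$; R10: $(\tau_1\oplus\tau_2)\otimes\tau\mapsto(\tau_1\otimes\tau)\oplus(\tau_2\otimes\tau)$;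 R11: $\tau\otimes(\tau_1\oplus\tau_2)\mapsto(\tau\otimes\tau_1)\oplus(\tau\otimes\tau_2)$; R12: $f(\tau_1\oplus\tau_2)\mapsto f(\tau_1)\oplus f(\tau_2)\oplus c$; R13: $f(0)\mapsto c$. A rewriting step replaces one occurrence of a subterm matching a left-hand side by the corresponding right-hand side. *)

theory Defs
  imports Main "HOL-Library.Sublist"
begin

text \<open>Symbols of V \<uplus> Sigma: field constants, variables, the two binary symbols, affine symbols.\<close>
datatype ('a, 'v, 'f) sym = SC 'a | SV 'v | SPlus | STimes | SF 'f

text \<open>Terms; sums and products are flat sequences (see wf_term).\<close>
datatype ('a, 'v, 'f) trm =
    Cst 'a
  | Var 'v
  | Sum "('a, 'v, 'f) trm list"
  | Prod "('a, 'v, 'f) trm list"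
  | App 'f "('a, 'v, 'f) trm"

fun is_sum :: "('a, 'v, 'f) trm \<Rightarrow> bool" where
  "is_sum (Sum _) = True"
| "is_sum _ = False"

fun is_prod :: "('a, 'v, 'f) trm \<Rightarrow> bool" where
  "is_prod (Prod _) = True"
| "is_prod _ = False"

fun wf_term :: "('a, 'v, 'f) trm \<Rightarrow> bool" where
  "wf_term (Cst c) = True"
| "wf_term (Var v) = True"
| "wf_term (Sum xs) = (2 \<le> length xs \<and> (\<forall>x\<in>set xs. wf_term x \<and> \<not> is_sum x))"
| "wf_term (Prod xs) = (2 \<le> length xs \<and> (\<forall>x\<in>set xs. wf_term x \<and> \<not> is_prod x))"
| "wf_term (App f t) = wf_term t"

fun sum_args :: "('a, 'v, 'f) trm \<Rightarrow> ('a, 'v, 'f) trm list" where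
  "sum_args (Sum xs) = xs"
| "sum_args t = [t]"

fun prod_args :: "('a, 'v, 'f) trm \<Rightarrow> ('a, 'v, 'f) trm list" where
  "prod_args (Prod xs) = xs"
| "prod_args t = [t]"

definition plus :: "('a, 'v, 'f) trm \<Rightarrow> ('a, 'v, 'f) trm \<Rightarrow> ('a, 'v, 'f) trm" where
  "plus s t = Sum (sum_args s @ sum_args t)"

definition times :: "('a, 'v, 'f) trm \<Rightarrow> ('a, 'v, 'f) trm \<Rightarrow> ('a, 'v, 'f) trm" where
  "times s t = Prod (prod_args s @ prod_args t)"

fun no_plus :: "('a, 'v, 'f) trm \<Rightarrow> bool" where
  "no_plus (Cst c) = True"
| "no_plus (Var v) = True"
| "no_plus (Sum xs) = False"
| "no_plus (Prod xs) = (\<forall>x\<in>set xs. no_plus x)"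
| "no_plus (App f t) = no_plus t"

fun is_factor :: "('a, 'v, 'f) trm \<Rightarrow> bool" where
  "is_factor (Cst c) = True"
| "is_factor (Var v) = True"
| "is_factor (App f t) = no_plus t"
| "is_factor _ = False"

text \<open>The product of a nonempty sequence of terms (a single factor is a product with k = 1).\<close>
fun prod_of :: "('a, 'v, 'f) trm list \<Rightarrow> ('a, 'v, 'f) trm" where
  "prod_of [x] = x"
| "prod_of xs = Prod xs"

text \<open>The sum of a sequence of monomials; the empty sum (k = 0) is the constant 0.\<close>
fun sum_of :: "('a::zero, 'v, 'f) trm list \<Rightarrow> ('a, 'v, 'f) trm" where
  "sum_of [] = Cst 0"
| "sum_of [x] = x"
| "sum_of xs = Sum xs"

definition is_monomial :: "('a::zero, 'v, 'f) trm \<Rightarrow> bool" where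
  "is_monomial m = (\<exists>as. as \<noteq> [] \<and> m = prod_of as \<and>
      (\<forall>a\<in>set as. is_factor a \<and> a \<noteq> Cst 0))"

abbreviation mfactors :: "('a, 'v, 'f) trm \<Rightarrow> ('a, 'v, 'f) trm list" where
  "mfactors m \<equiv> prod_args m"

fun ins_by :: "('b \<Rightarrow> 'b \<Rightarrow> bool) \<Rightarrow> 'b \<Rightarrow> 'b list \<Rightarrow> 'b list" where
  "ins_by r x [] = [x]"
| "ins_by r x (y # ys) = (if r x y then x # y # ys else y # ins_by r x ys)"

definition sort_by :: "('b \<Rightarrow> 'b \<Rightarrow> bool) \<Rightarrow> 'b list \<Rightarrow> 'b list" where
  "sort_by r xs = foldr (ins_by r) xs []"

fun lex_ge :: "('b \<Rightarrow> 'b \<Rightarrow> bool) \<Rightarrow> 'b list \<Rightarrow> 'b list \<Rightarrow> bool" where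
  "lex_ge r [] [] = True"
| "lex_ge r (x # xs) [] = True"
| "lex_ge r [] (y # ys) = False"
| "lex_ge r (x # xs) (y # ys) = (if x = y then lex_ge r xs ys else r x y)"

definition gep_with :: "(('a, 'v, 'f) trm \<Rightarrow> ('a, 'v, 'f) trm \<Rightarrow> bool)
    \<Rightarrow> ('a, 'v, 'f) trm \<Rightarrow> ('a, 'v, 'f) trm \<Rightarrow> bool" where
  "gep_with r m m' = lex_ge r (sort_by r (prod_args m)) (sort_by r (prod_args m'))"

text \<open>Factor order with a recursion-depth (fuel) parameter; the mutual recursion
  between \<ge>l and \<ge>p is on strictly smaller terms, so fuel size a + size b + 1 suffices.\<close>
fun gel_fuel :: "nat \<Rightarrow> (('a, 'v, 'f) sym \<Rightarrow> ('a, 'v, 'f) sym \<Rightarrow> bool)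
    \<Rightarrow> ('a, 'v, 'f) trm \<Rightarrow> ('a, 'v, 'f) trm \<Rightarrow> bool" where
  "gel_fuel 0 ge a b = False"
| "gel_fuel (Suc d) ge a b =
     (case a of
        Cst c \<Rightarrow> (case b of Cst c' \<Rightarrow> ge (SC c) (SC c') | Var v' \<Rightarrow> ge (SC c) (SV v')
                   | App g u \<Rightarrow> ge (SC c) (SF g) | _ \<Rightarrow> False)
      | Var v \<Rightarrow> (case b of Cst c' \<Rightarrow> ge (SV v) (SC c') | Var v' \<Rightarrow> ge (SV v) (SV v')
                   | App g u \<Rightarrow> ge (SV v) (SF g) | _ \<Rightarrow> False)
      | App f t \<Rightarrow> (case b of Cst c' \<Rightarrow> ge (SF f) (SC c') | Var v' \<Rightarrow> ge (SF f) (SV v')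
                   | App g u \<Rightarrow> (f \<noteq> g \<and> ge (SF f) (SF g)) \<or> (f = g \<and> gep_with (gel_fuel d ge) t u)
                   | _ \<Rightarrow> False)
      | _ \<Rightarrow> False)"

definition ge_l :: "(('a, 'v, 'f) sym \<Rightarrow> ('a, 'v, 'f) sym \<Rightarrow> bool)
    \<Rightarrow> ('a, 'v, 'f) trm \<Rightarrow> ('a, 'v, 'f) trm \<Rightarrow> bool" where
  "ge_l ge a b = gel_fuel (size a + size b + 1) ge a b"

definition ge_p :: "(('a, 'v, 'f) sym \<Rightarrow> ('a, 'v, 'f) sym \<Rightarrow> bool)
    \<Rightarrow> ('a, 'v, 'f) trm \<Rightarrow> ('a, 'v, 'f) trm \<Rightarrow> bool" where
  "ge_p ge m m' = gep_with (ge_l ge) m m'"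

definition gt_p :: "(('a, 'v, 'f) sym \<Rightarrow> ('a, 'v, 'f) sym \<Rightarrow> bool)
    \<Rightarrow> ('a, 'v, 'f) trm \<Rightarrow> ('a, 'v, 'f) trm \<Rightarrow> bool" where
  "gt_p ge m m' = (ge_p ge m m' \<and>
      sort_by (ge_l ge) (prod_args m) \<noteq> sort_by (ge_l ge) (prod_args m'))"

definition total_order :: "('b \<Rightarrow> 'b \<Rightarrow> bool) \<Rightarrow> bool" where
  "total_order r = ((\<forall>x. r x x) \<and> (\<forall>x y. r x y \<and> r y x \<longrightarrow> x = y)
      \<and> (\<forall>x y z. r x y \<and> r y z \<longrightarrow> r x z) \<and> (\<forall>x y. r x y \<or> r y x))"

text \<open>Subterms at occurrences; in a flat sum/product every contiguous subsequence of
  length at least 2 is a subterm (associativity).\<close>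
fun occs :: "('a, 'v, 'f) trm \<Rightarrow> ('a, 'v, 'f) trm set" where
  "occs (Cst c) = {Cst c}"
| "occs (Var v) = {Var v}"
| "occs (Sum xs) = {Sum ys | ys. sublist ys xs \<and> 2 \<le> length ys} \<union> (\<Union>x\<in>set xs. occs x)"
| "occs (Prod xs) = {Prod ys | ys. sublist ys xs \<and> 2 \<le> length ys} \<union> (\<Union>x\<in>set xs. occs x)"
| "occs (App f t) = insert (App f t) (occs t)"

definition redex :: "(('a::{zero,one}, 'v, 'f) sym \<Rightarrow> ('a, 'v, 'f) sym \<Rightarrow> bool)
    \<Rightarrow> ('a, 'v, 'f) trm \<Rightarrow> bool" where
  "redex ge s =
     ((\<exists>ms. s = Sum ms \<and> (\<forall>m\<in>set ms. is_monomial m) \<and> sort_by (ge_p ge) ms \<noteq> ms)  \<comment> \<open>R1\<close>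
    \<or> (\<exists>as. s = Prod as \<and> (\<forall>a\<in>set as. is_factor a) \<and> sort_by (ge_l ge) as \<noteq> as)  \<comment> \<open>R2\<close>
    \<or> (\<exists>t. wf_term t \<and> s = plus t t)  \<comment> \<open>R3\<close>
    \<or> (\<exists>t. wf_term t \<and> s = times t (Cst 0))  \<comment> \<open>R4\<close>
    \<or> (\<exists>t. wf_term t \<and> s = times (Cst 0) t)  \<comment> \<open>R5\<close>
    \<or> (\<exists>t. wf_term t \<and> s = plus t (Cst 0))  \<comment> \<open>R6\<close>
    \<or> (\<exists>t. wf_term t \<and> s = plus (Cst 0) t)  \<comment> \<open>R7\<close>
    \<or> (\<exists>t. wf_term t \<and> s = times t (Cst 1))  \<comment> \<open>R8\<close>
    \<or> (\<exists>t. wf_term t \<and> s = times (Cst 1) t)  \<comment> \<open>R9\<close>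
    \<or> (\<exists>t1 t2 t. wf_term t1 \<and> wf_term t2 \<and> wf_term t \<and> s = times (plus t1 t2) t)  \<comment> \<open>R10\<close>
    \<or> (\<exists>t1 t2 t. wf_term t1 \<and> wf_term t2 \<and> wf_term t \<and> s = times t (plus t1 t2))  \<comment> \<open>R11\<close>
    \<or> (\<exists>f t1 t2. wf_term t1 \<and> wf_term t2 \<and> s = App f (plus t1 t2))  \<comment> \<open>R12\<close>
    \<or> (\<exists>f. s = App f (Cst 0)))  \<comment> \<open>R13\<close>"

definition normal_form :: "(('a::{zero,one}, 'v, 'f) sym \<Rightarrow> ('a, 'v, 'f) sym \<Rightarrow> bool)
    \<Rightarrow> ('a, 'v, 'f) trm \<Rightarrow> bool" where
  "normal_form ge t = (\<forall>s\<in>occs t. \<not> redex ge s)"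

end

theory Submission
  imports Defs
begin

text \<open>
  Two adjacent arguments of a flat sum or product always form a subterm occurrence, so in a
  normal form the binary rules are blocked between neighbours: no argument of a product or of an
  affine symbol is a sum (R10--R12), no argument of a sum or product is 0 (R4--R7), and no two
  neighbouring summands are equal (R3). Hence a normal form is 0, a single plus-free term, or a
  flat sum of plus-free terms, and each plus-free nonzero term is a monomial. Irreducibility under
  R1 and R2 says that the summands and the factors are fixed points of the sort; since
  \<open>\<ge>l\<close> is total on factors (by induction on size through its mutual recursion with
  \<open>\<ge>p\<close>), a fixed point of the sort is a descending list. Strictness of \<open>>p\<close>
  between neighbours follows from R3, since a well-formed monomial whose factor list is sorted is
  determined by its sorted factor list.
\<close>

lemma set_ins_by: "set (ins_by r x ys) = insert x (set ys)"
  by (induction ys) auto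

lemma set_sort_by [simp]: "set (sort_by r xs) = set xs"
  by (induction xs) (auto simp: sort_by_def set_ins_by)

lemma hd_ins_by: "hd (ins_by r x ys) = x \<or> (ys \<noteq> [] \<and> hd (ins_by r x ys) = hd ys)"
  by (cases ys) auto

lemma sort_by_Cons: "sort_by r (x # xs) = ins_by r x (sort_by r xs)"
  by (simp add: sort_by_def)

lemma successively_ins_by:
  assumes "\<And>a b. a \<in> insert x (set ys) \<Longrightarrow> b \<in> insert x (set ys) \<Longrightarrow> r a b \<or> r b a"
    and "successively r ys"
  shows "successively r (ins_by r x ys)"
  using assms
proof (induction ys)
  case (Cons y ys)
  show ?case
  proof (cases "r x y")
    case False
    then have "r y x" using Cons.prems(1)[of x y] by auto
    then show ?thesis
      using Cons hd_ins_by[of r x ys] False by (auto simp: successively_Cons)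
  qed (use Cons.prems in simp)
qed simp

lemma successively_sort_by:
  "(\<And>a b. a \<in> set xs \<Longrightarrow> b \<in> set xs \<Longrightarrow> r a b \<or> r b a) \<Longrightarrow> successively r (sort_by r xs)"
proof (induction xs)
  case (Cons x xs)
  then have "successively r (sort_by r xs)" by simp
  with Cons.prems show ?case
    unfolding sort_by_Cons by (intro successively_ins_by) auto
qed (simp add: sort_by_def)

lemma successively_if_adjacent:
  "(\<And>x y. sublist [x, y] xs \<Longrightarrow> P x y) \<Longrightarrow> successively P xs"
proof (induction P xs rule: successively.induct)
  case (3 P x y xs)
  then show ?case
    by (auto intro: sublist_Cons_right[THEN iffD2])
qed simp_all

lemma adjacent_sublist_exists:
  assumes "2 \<le> length xs" "x \<in> set xs"
  shows "\<exists>y. sublist [x, y] xs \<or> sublist [y, x] xs"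
proof -
  obtain us vs where xs: "xs = us @ x # vs" using assms(2) by (meson split_list)
  show ?thesis
  proof (cases vs)
    case (Cons z zs)
    then have "sublist [x, z] xs" using xs by (metis append_Cons append_Nil sublist_appendI)
    then show ?thesis by blast
  next
    case Nil
    then obtain ws y where "us = ws @ [y]" using xs assms(1) by (cases us rule: rev_cases) auto
    then have "sublist [y, x] xs" using xs Nil by simp
    then show ?thesis by blast
  qed
qed

lemma lex_ge_total:
  "(\<And>a b. a \<in> set xs \<Longrightarrow> b \<in> set ys \<Longrightarrow> r a b \<or> r b a) \<Longrightarrow> lex_ge r xs ys \<or> lex_ge r ys xs"
  by (induction r xs ys rule: lex_ge.induct) auto

lemma gep_with_total:
  "(\<And>x y. x \<in> set (prod_args m) \<Longrightarrow> y \<in> set (prod_args m') \<Longrightarrow> r x y \<or> r y x)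
    \<Longrightarrow> gep_with r m m' \<or> gep_with r m' m"
  unfolding gep_with_def by (rule lex_ge_total) simp

lemma factor_of_prod_args:
  "wf_term t \<Longrightarrow> no_plus t \<Longrightarrow> x \<in> set (prod_args t) \<Longrightarrow> wf_term x \<and> is_factor x"
  by (cases t; cases x) auto

lemma size_prod_args: "x \<in> set (prod_args t) \<Longrightarrow> size x \<le> size t"
  by (cases t) (auto intro: le_SucI size_list_estimation')

lemma gel_fuel_total:
  assumes tot: "\<And>x y. ge x y \<or> ge y x"
  shows "wf_term a \<Longrightarrow> is_factor a \<Longrightarrow> wf_term b \<Longrightarrow> is_factor b \<Longrightarrow> size a + size b < d
    \<Longrightarrow> gel_fuel d ge a b \<or> gel_fuel d ge b a"
proof (induction d arbitrary: a b)
  case (Suc d)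
  show ?case
  proof (cases "\<exists>f t u. a = App f t \<and> b = App f u")
    case True
    then obtain f t u where a: "a = App f t" and b: "b = App f u" by blast
    have "gep_with (gel_fuel d ge) t u \<or> gep_with (gel_fuel d ge) u t"
    proof (rule gep_with_total)
      fix x y
      assume x: "x \<in> set (prod_args t)" and y: "y \<in> set (prod_args u)"
      have "size x + size y < d"
        using size_prod_args[OF x] size_prod_args[OF y] Suc.prems(5) a b by simp
      moreover have "wf_term t" "no_plus t" "wf_term u" "no_plus u"
        using Suc.prems(1-4) a b by simp_all
      ultimately show "gel_fuel d ge x y \<or> gel_fuel d ge y x"
        using Suc.IH factor_of_prod_args x y by blast
    qed
    then show ?thesis using a b by simp
  next
    case False
    then show ?thesis using Suc.prems tot by (cases a; cases b) auto
  qed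
qed simp

lemma ge_l_total:
  "(\<And>x y. ge x y \<or> ge y x) \<Longrightarrow> wf_term a \<Longrightarrow> is_factor a \<Longrightarrow> wf_term b \<Longrightarrow> is_factor b
    \<Longrightarrow> ge_l ge a b \<or> ge_l ge b a"
  unfolding ge_l_def by (metis add.commute gel_fuel_total less_add_one)

lemma ge_p_total:
  "(\<And>x y. ge x y \<or> ge y x) \<Longrightarrow> wf_term m \<Longrightarrow> no_plus m \<Longrightarrow> wf_term m' \<Longrightarrow> no_plus m'
    \<Longrightarrow> ge_p ge m m' \<or> ge_p ge m' m"
  unfolding ge_p_def by (rule gep_with_total) (meson ge_l_total factor_of_prod_args)

lemma sum_args_non_sum: "\<not> is_sum x \<Longrightarrow> sum_args x = [x]"
  by (cases x) auto

lemma prod_args_non_prod: "\<not> is_prod x \<Longrightarrow> prod_args x = [x]"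
  by (cases x) auto

lemma plus_pair: "\<not> is_sum x \<Longrightarrow> \<not> is_sum y \<Longrightarrow> plus x y = Sum [x, y]"
  by (simp add: plus_def sum_args_non_sum)

lemma times_pair: "\<not> is_prod x \<Longrightarrow> \<not> is_prod y \<Longrightarrow> times x y = Prod [x, y]"
  by (simp add: times_def prod_args_non_prod)

lemma Sum_eq_plus:
  assumes "wf_term (Sum xs)"
  obtains t1 t2 where "wf_term t1" "wf_term t2" "Sum xs = plus t1 t2"
proof -
  obtain y z zs where xs: "xs = y # z # zs"
    using assms by (cases xs rule: remdups_adj.cases) auto
  show ?thesis
  proof (cases zs)
    case Nil
    then show ?thesis using that[of y z] assms xs by (simp add: plus_pair)
  next
    case Cons
    then show ?thesis using that[of y "Sum (z # zs)"] assms xs by (simp add: plus_def sum_args_non_sum)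
  qed
qed

lemma redex_R1:
  "\<forall>m\<in>set ms. is_monomial m \<Longrightarrow> sort_by (ge_p ge) ms \<noteq> ms \<Longrightarrow> redex ge (Sum ms)"
  unfolding redex_def by (rule disjI1) blast

lemma redex_R2:
  "\<forall>a\<in>set as. is_factor a \<Longrightarrow> sort_by (ge_l ge) as \<noteq> as \<Longrightarrow> redex ge (Prod as)"
  unfolding redex_def by (rule disjI2, rule disjI1) blast

lemma redex_R3: "wf_term t \<Longrightarrow> redex ge (plus t t)"
  unfolding redex_def by fast

lemma redex_R4_R5:
  "wf_term t \<Longrightarrow> redex ge (times t (Cst 0))"
  "wf_term t \<Longrightarrow> redex ge (times (Cst 0) t)"
  unfolding redex_def by fast+

lemma redex_R6_R7:
  "wf_term t \<Longrightarrow> redex ge (plus t (Cst 0))"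
  "wf_term t \<Longrightarrow> redex ge (plus (Cst 0) t)"
  unfolding redex_def by fast+

lemma redex_R10_R11:
  "wf_term t1 \<Longrightarrow> wf_term t2 \<Longrightarrow> wf_term t \<Longrightarrow> redex ge (times (plus t1 t2) t)"
  "wf_term t1 \<Longrightarrow> wf_term t2 \<Longrightarrow> wf_term t \<Longrightarrow> redex ge (times t (plus t1 t2))"
  unfolding redex_def by fast+

lemma redex_R12: "wf_term t1 \<Longrightarrow> wf_term t2 \<Longrightarrow> redex ge (App f (plus t1 t2))"
  unfolding redex_def by fast

lemma redex_times_sum:
  assumes "wf_term (Sum xs)" "wf_term y" "\<not> is_prod y"
  shows "redex ge (Prod [Sum xs, y])" "redex ge (Prod [y, Sum xs])"
proof -
  obtain t1 t2 where t: "wf_term t1" "wf_term t2" "Sum xs = plus t1 t2"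
    using Sum_eq_plus[OF assms(1)] .
  have "Prod [Sum xs, y] = times (plus t1 t2) y" "Prod [y, Sum xs] = times y (plus t1 t2)"
    unfolding t(3)[symmetric] using assms(3) by (simp_all add: times_pair)
  then show "redex ge (Prod [Sum xs, y])" "redex ge (Prod [y, Sum xs])"
    using redex_R10_R11[OF t(1,2) assms(2)] by simp_all
qed

lemma redex_times_zero:
  assumes "wf_term y" "\<not> is_prod y"
  shows "redex ge (Prod [Cst 0, y])" "redex ge (Prod [y, Cst 0])"
  using redex_R4_R5[OF assms(1)] assms(2) by (simp_all add: times_pair)

lemma redex_plus_zero:
  assumes "wf_term y" "\<not> is_sum y"
  shows "redex ge (Sum [Cst 0, y])" "redex ge (Sum [y, Cst 0])"
  using redex_R6_R7[OF assms(1)] assms(2) by (simp_all add: plus_pair)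

lemma redex_plus_self: "wf_term y \<Longrightarrow> \<not> is_sum y \<Longrightarrow> redex ge (Sum [y, y])"
  using redex_R3[of y] by (simp add: plus_pair)

lemma redex_App_sum: "wf_term (Sum xs) \<Longrightarrow> redex ge (App f (Sum xs))"
  by (metis Sum_eq_plus redex_R12)

lemma normal_form_argD:
  "normal_form ge (Sum xs) \<Longrightarrow> x \<in> set xs \<Longrightarrow> normal_form ge x"
  "normal_form ge (Prod xs) \<Longrightarrow> x \<in> set xs \<Longrightarrow> normal_form ge x"
  "normal_form ge (App f t) \<Longrightarrow> normal_form ge t"
  unfolding normal_form_def by auto

lemma normal_form_not_redex: "wf_term t \<Longrightarrow> normal_form ge t \<Longrightarrow> \<not> redex ge t"
  unfolding normal_form_def by (cases t) auto

lemma normal_form_not_redex_adjacent: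
  "normal_form ge (Sum xs) \<Longrightarrow> sublist [x, y] xs \<Longrightarrow> \<not> redex ge (Sum [x, y])"
  "normal_form ge (Prod xs) \<Longrightarrow> sublist [x, y] xs \<Longrightarrow> \<not> redex ge (Prod [x, y])"
  unfolding normal_form_def by auto

lemma normal_form_Prod_arg:
  assumes w: "wf_term (Prod xs)" and nf: "normal_form ge (Prod xs)" and x: "x \<in> set xs"
  shows "\<not> is_sum x" "x \<noteq> Cst 0"
proof -
  obtain y where y: "sublist [x, y] xs \<or> sublist [y, x] xs"
    using adjacent_sublist_exists w x by fastforce
  then have "y \<in> set xs" by (auto dest: set_mono_sublist)
  then have wy: "wf_term y" "\<not> is_prod y" using w by auto
  have nr: "\<not> redex ge (Prod [x, y]) \<or> \<not> redex ge (Prod [y, x])"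
    using y normal_form_not_redex_adjacent(2)[OF nf] by blast
  show "\<not> is_sum x"
  proof
    assume "is_sum x"
    then obtain zs where "x = Sum zs" by (cases x) auto
    then show False using nr redex_times_sum[OF _ wy] w x by auto
  qed
  show "x \<noteq> Cst 0" using nr redex_times_zero[OF wy] by auto
qed

lemma normal_form_Sum_arg:
  assumes w: "wf_term (Sum xs)" and nf: "normal_form ge (Sum xs)" and x: "x \<in> set xs"
  shows "wf_term x" "\<not> is_sum x" "normal_form ge x" "x \<noteq> Cst 0"
proof -
  show "wf_term x" "\<not> is_sum x" using w x by auto
  show "normal_form ge x" using normal_form_argD(1)[OF nf x] .
  obtain y where y: "sublist [x, y] xs \<or> sublist [y, x] xs"
    using adjacent_sublist_exists w x by fastforce
  then have "y \<in> set xs" by (auto dest: set_mono_sublist)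
  then have "wf_term y" "\<not> is_sum y" using w by auto
  then show "x \<noteq> Cst 0"
    using y normal_form_not_redex_adjacent(1)[OF nf] redex_plus_zero by blast
qed

lemma no_plus_if_normal_form: "wf_term t \<Longrightarrow> normal_form ge t \<Longrightarrow> \<not> is_sum t \<Longrightarrow> no_plus t"
proof (induction t)
  case (Prod xs)
  have "no_plus x" if "x \<in> set xs" for x
  proof -
    have "normal_form ge x" "\<not> is_sum x"
      using normal_form_argD(2)[OF Prod.prems(2) that] normal_form_Prod_arg(1)[OF Prod.prems(1,2) that] .
    then show ?thesis using Prod.IH[OF that] Prod.prems(1) that by simp
  qed
  then show ?case by simp
next
  case (App f t)
  then have "\<not> is_sum t"
    using normal_form_not_redex[of "App f t" ge] redex_App_sum[of _ ge f] by (cases t) auto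
  with App show ?case by (auto dest: normal_form_argD)
qed auto

lemma prod_of_prod_args: "wf_term m \<Longrightarrow> prod_of (prod_args m) = m"
  by (cases m; cases "prod_args m" rule: prod_of.cases) auto

lemma monomial_sorted_if_normal_form:
  assumes "wf_term m" "no_plus m" "normal_form ge m" "m \<noteq> Cst 0"
  shows "is_monomial m" "sort_by (ge_l ge) (mfactors m) = mfactors m"
proof -
  have factors: "\<forall>x\<in>set (mfactors m). is_factor x \<and> x \<noteq> Cst 0"
  proof
    fix x assume x: "x \<in> set (mfactors m)"
    have "x \<noteq> Cst 0"
    proof (cases "is_prod m")
      case True
      then obtain xs where "m = Prod xs" by (cases m) auto
      then show ?thesis using normal_form_Prod_arg(2) assms(1,3) x by auto
    qed (use x assms(4) prod_args_non_prod[of m] in auto)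
    then show "is_factor x \<and> x \<noteq> Cst 0" using factor_of_prod_args[OF assms(1,2) x] by simp
  qed
  moreover have "mfactors m \<noteq> []" using assms(1) by (cases m) auto
  ultimately show "is_monomial m"
    unfolding is_monomial_def using prod_of_prod_args[OF assms(1)] by metis
  show "sort_by (ge_l ge) (mfactors m) = mfactors m"
  proof (cases "is_prod m")
    case True
    then obtain xs where "m = Prod xs" by (cases m) auto
    then show ?thesis using normal_form_not_redex[OF assms(1,3)] redex_R2 factors by auto
  qed (simp add: prod_args_non_prod sort_by_def)
qed

lemma successively_factors:
  "(\<And>x y. ge x y \<or> ge y x) \<Longrightarrow> wf_term m \<Longrightarrow> no_plus m
    \<Longrightarrow> sort_by (ge_l ge) (mfactors m) = mfactors m \<Longrightarrow> successively (ge_l ge) (mfactors m)"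
  by (metis successively_sort_by ge_l_total factor_of_prod_args)

lemma prod_args_inject: "wf_term m \<Longrightarrow> wf_term m' \<Longrightarrow> prod_args m = prod_args m' \<Longrightarrow> m = m'"
  by (cases m; cases m') auto

lemma gt_p_if_ge_p:
  assumes "ge_p ge m m'" "m \<noteq> m'" "wf_term m" "wf_term m'"
    and "sort_by (ge_l ge) (mfactors m) = mfactors m" "sort_by (ge_l ge) (mfactors m') = mfactors m'"
  shows "gt_p ge m m'"
  using assms prod_args_inject unfolding gt_p_def by metis

lemma normal_form_monomial:
  assumes "\<And>x y. ge x y \<or> ge y x" "wf_term m" "\<not> is_sum m" "normal_form ge m" "m \<noteq> Cst 0"
  shows "is_monomial m" "successively (ge_l ge) (mfactors m)"
proof -
  have "no_plus m" using no_plus_if_normal_form assms(2-4) by blast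
  then show "is_monomial m" "successively (ge_l ge) (mfactors m)"
    using monomial_sorted_if_normal_form[OF assms(2) _ assms(4,5)] successively_factors[OF assms(1,2)]
    by simp_all
qed

lemma normal_form_Sum_gt_p:
  assumes tot: "\<And>x y. ge x y \<or> ge y x" and w: "wf_term (Sum ms)" and nf: "normal_form ge (Sum ms)"
  shows "successively (gt_p ge) ms"
proof -
  have m: "wf_term m \<and> no_plus m \<and> is_monomial m \<and> sort_by (ge_l ge) (mfactors m) = mfactors m"
    if "m \<in> set ms" for m
  proof -
    note arg = normal_form_Sum_arg[OF w nf that]
    moreover have "no_plus m" using no_plus_if_normal_form arg by blast
    ultimately show ?thesis using monomial_sorted_if_normal_form[of m ge] by blast
  qed
  then have "\<forall>m\<in>set ms. is_monomial m" by blast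
  then have "sort_by (ge_p ge) ms = ms"
    using normal_form_not_redex[OF w nf] redex_R1 by blast
  moreover have "ge_p ge a b \<or> ge_p ge b a" if "a \<in> set ms" "b \<in> set ms" for a b
    using ge_p_total[where ge = ge, OF tot] m[OF that(1)] m[OF that(2)] by blast
  ultimately have ge: "successively (ge_p ge) ms"
    using successively_sort_by[of ms "ge_p ge"] by simp
  have ne: "successively (\<noteq>) ms"
  proof (rule successively_if_adjacent)
    fix x y
    assume xy: "sublist [x, y] ms"
    then have "x \<in> set ms" by (auto dest: set_mono_sublist)
    then have "redex ge (Sum [x, x])" using w by (auto intro: redex_plus_self)
    then show "x \<noteq> y" using normal_form_not_redex_adjacent(1)[OF nf xy] by blast
  qed
  show ?thesis
    unfolding successively_conv_nth
  proof (intro allI impI)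
    fix i assume i: "Suc i < length ms"
    then have "ms ! i \<in> set ms" "ms ! Suc i \<in> set ms" by simp_all
    with m show "gt_p ge (ms ! i) (ms ! Suc i)"
      using gt_p_if_ge_p[OF successively_nth[OF ge i] successively_nth[OF ne i]] by blast
  qed
qed

theorem lemma1:
  fixes ge :: "('a::{finite,field}, 'v, 'f::finite) sym \<Rightarrow> ('a, 'v, 'f) sym \<Rightarrow> bool"
    and n :: nat
    and \<tau> :: "('a, 'v, 'f) trm"
  assumes "card (UNIV :: 'a set) = 2 ^ n"
    and "total_order ge"
    and "wf_term \<tau>"
    and "normal_form ge \<tau>"
  shows "\<exists>ms. \<tau> = sum_of ms \<and> (\<forall>m\<in>set ms. is_monomial m)
    \<and> (\<forall>i. Suc i < length ms \<longrightarrow> gt_p ge (ms ! i) (ms ! Suc i))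
    \<and> (\<forall>m\<in>set ms. \<forall>j. Suc j < length (mfactors m)
          \<longrightarrow> ge_l ge (mfactors m ! j) (mfactors m ! Suc j))"
proof -
  have tot: "\<And>x y. ge x y \<or> ge y x" using assms(2) unfolding total_order_def by blast
  consider (Sum) ms where "\<tau> = Sum ms" | (zero) "\<tau> = Cst 0" | (monomial) "\<not> is_sum \<tau>" "\<tau> \<noteq> Cst 0"
    by (cases \<tau>) auto
  then show ?thesis
  proof cases
    case Sum
    have w: "wf_term (Sum ms)" and nf: "normal_form ge (Sum ms)" using assms(3,4) Sum by simp_all
    have mon: "is_monomial m \<and> successively (ge_l ge) (mfactors m)" if "m \<in> set ms" for m
      using normal_form_monomial[where ge = ge, OF tot normal_form_Sum_arg[OF w nf that]] by blast
    show ?thesis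
    proof (intro exI[of _ ms] conjI)
      show "\<tau> = sum_of ms" using w Sum by (cases ms rule: sum_of.cases) auto
      show "\<forall>i. Suc i < length ms \<longrightarrow> gt_p ge (ms ! i) (ms ! Suc i)"
        using normal_form_Sum_gt_p[where ge = ge, OF tot w nf] unfolding successively_conv_nth .
    qed (use mon in \<open>auto simp: successively_conv_nth\<close>)
  next
    case zero
    then show ?thesis by (intro exI[of _ "[]"]) simp
  next
    case monomial
    then have "is_monomial \<tau>" "successively (ge_l ge) (mfactors \<tau>)"
      using normal_form_monomial[where ge = ge, OF tot assms(3) _ assms(4)] by blast+
    then show ?thesis
      unfolding successively_conv_nth by (intro exI[of _ "[\<tau>]"]) simp
  qed
qed

end
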